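(* In $M_3(K[T_3])$ the following equalities hold, where $f_{ij}=\frac12(t_it_j+t_jt_i)-\frac13\mathrm{tr}(t_it_j)I$, $f_{iij}=[t_i^2,t_j]$, $f_{132}=[t_1t_3+t_3t_1,t_2]$, $f_{123}=[t_1t_2+t_2t_1,t_3]$: (i) $\mathrm{tr}(t_1t_2t_3)\,t_1=\frac12\big(\mathrm{tr}(t_1^2)[t_2,t_3]-\mathrm{tr}(t_1t_2)[t_1,t_3]+\mathrm{tr}(t_1t_3)[t_1,t_2]\big)$; (ii) $\mathrm{tr}(t_1t_2t_3)[t_1,t_2]=\frac14\big(\mathrm{tr}(t_1t_3)\mathrm{tr}(t_2^2)-\mathrm{tr}(t_1t_2)\mathrm{tr}(t_2t_3)\big)t_1+\frac14\big(\mathrm{tr}(t_1^2)\mathrm{tr}(t_2t_3)-\mathrm{tr}(t_1t_2)\mathrm{tr}(t_1t_3)\big)t_2+\frac14\big(\mathrm{tr}(t_1t_2)^2-\mathrm{tr}(t_1^2)\mathrm{tr}(t_2^2)\big)t_3$; (iii) $\mathrm{tr}(t_1t_2t_3)f_{11}=\frac14\mathrm{tr}(t_1t_3)f_{112}-\frac14\mathrm{tr}(t_1t_2)f_{113}-\frac1{12}\mathrm{tr}(t_1^2)f_{132}+\frac1{12}\mathrm{tr}(t_1^2)f_{123}$; (iv) $\mathrm{tr}(t_1t_2t_3)f_{112}=\frac12\big(\mathrm{tr}(t_1t_3)\mathrm{tr}(t_2^2)-\mathrm{tr}(t_1t_2)\mathrm{tr}(t_2t_3)\big)f_{11}+\f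rac12\big(\mathrm{tr}(t_1^2)\mathrm{tr}(t_2t_3)-\mathrm{tr}(t_1t_2)\mathrm{tr}(t_1t_3)\big)f_{12}+\frac12\big(\mathrm{tr}(t_1t_2)^2-\mathrm{tr}(t_1^2)\mathrm{tr}(t_2^2)\big)f_{13}$.
   Context: $K$ is a field of characteristic $0$. $T_3=\{t^{(k)}_{ij}\mid1\le i<j\le3,\ k=1,2,3\}$ are commuting indeterminates and $t_k\in M_3(K[T_3])$ is the generic skew-symmetric matrix with zero diagonal, $(i,j)$ entry $t^{(k)}_{ij}$ and $(j,i)$ entry $-t^{(k)}_{ij}$ for $i<j$. $I$ is the $3\times3$ identity matrix and $[a,b]=ab-ba$; scalars $\mathrm{tr}(\cdot)\in K[T_3]$ multiply matrices entrywise. *)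

theory Defs
  imports "HOL-Analysis.Determinants" "HOL-Library.Poly_Mapping" "HOL-Library.Numeral_Type"
begin

text \<open>K[T_3] is rendered as the polynomial ring (Poly_Mapping: monomials = finitely
supported exponent maps) over K in the indeterminates t^(k)_(i,j), indexed by triples
(k,i,j) :: nat * 3 * 3; only the indeterminates with k in {1,2,3} and i < j are used.
The index type 3 has elements 0 < 1 < 2 standing for rows/columns 1,2,3.\<close>

type_synonym 'k pol = "((nat \<times> 3 \<times> 3) \<Rightarrow>\<^sub>0 nat) \<Rightarrow>\<^sub>0 'k"

definition Var :: "nat \<Rightarrow> 3 \<Rightarrow> 3 \<Rightarrow> 'k::comm_ring_1 pol" where
  "Var k i j = Poly_Mapping.single (Poly_Mapping.single (k, i, j) 1) 1"

definition Const :: "'k::comm_ring_1 \<Rightarrow> 'k pol" where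
  "Const c = Poly_Mapping.single 0 c"

definition gen_skew :: "nat \<Rightarrow> ('k::comm_ring_1 pol)^3^3" where
  "gen_skew k = (\<chi> i j. if i < j then Var k i j else if j < i then - Var k j i else 0)"

definition msc :: "'a::times \<Rightarrow> 'a^'n^'m \<Rightarrow> 'a^'n^'m" (infixl \<open>*m\<close> 70) where
  "c *m A = (\<chi> i j. c * A $ i $ j)"

definition mcomm :: "'a::ring_1^'n^'n \<Rightarrow> 'a^'n^'n \<Rightarrow> 'a^'n^'n" where
  "mcomm A B = A ** B - B ** A"

definition fsym :: "nat \<Rightarrow> nat \<Rightarrow> ('k::field_char_0 pol)^3^3" where
  "fsym i j = Const (1/2) *m (gen_skew i ** gen_skew j + gen_skew j ** gen_skew i)
      - (Const (1/3) * trace (gen_skew i ** gen_skew j)) *m mat 1"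

definition fsq :: "nat \<Rightarrow> nat \<Rightarrow> ('k::field_char_0 pol)^3^3" where
  "fsq i j = mcomm (gen_skew i ** gen_skew i) (gen_skew j)"

definition fanti :: "nat \<Rightarrow> nat \<Rightarrow> nat \<Rightarrow> ('k::field_char_0 pol)^3^3" where
  "fanti i j k = mcomm (gen_skew i ** gen_skew j + gen_skew j ** gen_skew i) (gen_skew k)"

end

theory Submission
  imports Defs
begin

text \<open>An alternating 3 \<times> 3 matrix has only three independent entries, so once the denominators
2, 3, 4, 12 are cleared each identity is a polynomial identity with integer coefficients in the
nine entries of A, B, C, valid for alternating matrices over any commutative ring and checked by
expanding both sides. In K[T_3] the fractions come back because Const (1/n) inverts n; the
generic matrices t_k are alternating, so the theorem is a specialisation.\<close>

text \<open>The zero diagonal is required separately: skew-symmetry alone does not force it in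
characteristic 2.\<close>

definition alternating :: "'a::ring_1^'n^'n \<Rightarrow> bool" where
  "alternating A \<longleftrightarrow> (\<forall>i. A $ i $ i = 0) \<and> (\<forall>i j. A $ j $ i = - A $ i $ j)"

lemma alternating_gen_skew: "alternating (gen_skew k)"
  by (auto simp: alternating_def gen_skew_def not_less_iff_gr_or_eq)

lemma alternating_3_nth:
  fixes A :: "'a::ring_1^3^3"
  assumes "alternating A"
  shows "A $ 1 $ 1 = 0" "A $ 2 $ 2 = 0" "A $ 3 $ 3 = 0"
    "A $ 2 $ 1 = - A $ 1 $ 2" "A $ 3 $ 1 = - A $ 1 $ 3" "A $ 3 $ 2 = - A $ 2 $ 3"
  using assms unfolding alternating_def by blast+

lemma msc_msc: "a *m (b *m A) = (a * b) *m (A :: 'a::semigroup_mult^'n^'m)"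
  by (simp add: msc_def vec_eq_iff mult.assoc)

lemma msc_add_right: "c *m (A + B) = c *m A + c *m (B :: 'a::semiring^'n^'m)"
  by (simp add: msc_def vec_eq_iff distrib_left)

lemmas matrix3_expand_simps =
  vec_eq_iff forall_3 matrix_matrix_mult_def trace_def sum_3 msc_def mcomm_def

context
  fixes A B C :: "'a::comm_ring_1^3^3"
  assumes alternating: "alternating A" "alternating B" "alternating C"
begin

lemma alternating3_trace_triple_first:
  "(2 * trace (A ** B ** C)) *m A =
     trace (A ** A) *m mcomm B C - trace (A ** B) *m mcomm A C + trace (A ** C) *m mcomm A B"
  using alternating by (simp add: matrix3_expand_simps alternating_3_nth algebra_simps)

lemma alternating3_trace_triple_mcomm:
  "(4 * trace (A ** B ** C)) *m mcomm A B =
     (trace (A ** C) * trace (B ** B) - trace (A ** B) * trace (B ** C)) *m A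
   + (trace (A ** A) * trace (B ** C) - trace (A ** B) * trace (A ** C)) *m B
   + (trace (A ** B) ^ 2 - trace (A ** A) * trace (B ** B)) *m C"
  using alternating
  by (simp add: matrix3_expand_simps alternating_3_nth algebra_simps power2_eq_square)

lemma alternating3_trace_triple_traceless_square:
  "(4 * trace (A ** B ** C)) *m (3 *m (A ** A) - trace (A ** A) *m mat 1) =
     (3 * trace (A ** C)) *m mcomm (A ** A) B - (3 * trace (A ** B)) *m mcomm (A ** A) C
   - trace (A ** A) *m mcomm (A ** C + C ** A) B + trace (A ** A) *m mcomm (A ** B + B ** A) C"
  using alternating by (simp add: matrix3_expand_simps alternating_3_nth algebra_simps mat_def)

lemma alternating3_trace_triple_mcomm_square:
  "(4 * trace (A ** B ** C)) *m mcomm (A ** A) B =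
     (2 * (trace (A ** C) * trace (B ** B) - trace (A ** B) * trace (B ** C))) *m (A ** A)
   + (trace (A ** A) * trace (B ** C) - trace (A ** B) * trace (A ** C)) *m (A ** B + B ** A)
   + (trace (A ** B) ^ 2 - trace (A ** A) * trace (B ** B)) *m (A ** C + C ** A)"
  using alternating
  by (simp add: matrix3_expand_simps alternating_3_nth algebra_simps power2_eq_square)

end

lemma Const_mult: "Const a * Const b = Const (a * b)"
  by (simp add: Const_def mult_single)

lemma Const_numeral: "Const (numeral n) = numeral n"
  by (simp add: Const_def)

lemma numeral_mult_Const: "numeral n * Const c = Const (numeral n * c)"
  by (metis Const_mult Const_numeral)

lemma Const_1: "Const 1 = 1"
  by (simp add: Const_def)

text \<open>Writing the fractions as multiples of Const (1/12) makes the passage between the cleared and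
the fractional identities a ring identity.\<close>

lemma Const_twelfths:
  "Const (1/2 :: 'k::field_char_0) = 6 * Const (1/12)" "Const (1/3 :: 'k) = 4 * Const (1/12)"
  "Const (1/4 :: 'k) = 3 * Const (1/12)"
  by (simp_all add: numeral_mult_Const)

lemma msc_eq_Const_inverse:
  fixes A B :: "('k::field_char_0 pol)^'n^'m"
  assumes "(numeral n * c) *m A = B"
  shows "c *m A = Const (1 / numeral n) *m B"
  unfolding assms[symmetric]
  by (simp add: msc_msc mult.assoc[symmetric] mult.commute[of "Const _"] numeral_mult_Const Const_1)

context
  fixes A B C :: "('k::field_char_0 pol)^3^3"
  assumes alternating: "alternating A" "alternating B" "alternating C"
begin

lemma alternating3_trace_triple_first_Const:
  "trace (A ** B ** C) *m A =
     Const (1/2) *m (trace (A ** A) *m mcomm B C - trace (A ** B) *m mcomm A C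
                     + trace (A ** C) *m mcomm A B)"
  by (rule msc_eq_Const_inverse[OF alternating3_trace_triple_first[OF alternating]])

lemma alternating3_trace_triple_mcomm_Const:
  "trace (A ** B ** C) *m mcomm A B =
     (Const (1/4) * (trace (A ** C) * trace (B ** B) - trace (A ** B) * trace (B ** C))) *m A
   + (Const (1/4) * (trace (A ** A) * trace (B ** C) - trace (A ** B) * trace (A ** C))) *m B
   + (Const (1/4) * (trace (A ** B) ^ 2 - trace (A ** A) * trace (B ** B))) *m C"
  using msc_eq_Const_inverse[OF alternating3_trace_triple_mcomm[OF alternating]]
  by (simp add: msc_add_right msc_msc)

lemma alternating3_trace_triple_traceless_square_Const:
  "trace (A ** B ** C) *m
     (Const (1/2) *m (A ** A + A ** A) - (Const (1/3) * trace (A ** A)) *m mat 1) =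
     (Const (1/4) * trace (A ** C)) *m mcomm (A ** A) B
   - (Const (1/4) * trace (A ** B)) *m mcomm (A ** A) C
   - (Const (1/12) * trace (A ** A)) *m mcomm (A ** C + C ** A) B
   + (Const (1/12) * trace (A ** A)) *m mcomm (A ** B + B ** A) C"
proof -
  have "trace (A ** B ** C) *m
      (Const (1/2) *m (A ** A + A ** A) - (Const (1/3) * trace (A ** A)) *m mat 1)
    = Const (1/12) *m ((4 * trace (A ** B ** C)) *m (3 *m (A ** A) - trace (A ** A) *m mat 1))"
    by (simp add: vec_eq_iff msc_def Const_twelfths algebra_simps)
  also have "\<dots> = Const (1/12) *m
     ((3 * trace (A ** C)) *m mcomm (A ** A) B - (3 * trace (A ** B)) *m mcomm (A ** A) C
   - trace (A ** A) *m mcomm (A ** C + C ** A) B + trace (A ** A) *m mcomm (A ** B + B ** A) C)"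
    by (simp only: alternating3_trace_triple_traceless_square[OF alternating])
  finally show ?thesis
    by (simp add: vec_eq_iff msc_def Const_twelfths algebra_simps)
qed

text \<open>The scalar parts of the f_1j cancel: their coefficient is a Gram determinant with
a repeated row.\<close>

lemma alternating3_trace_triple_mcomm_square_Const:
  "trace (A ** B ** C) *m mcomm (A ** A) B =
     (Const (1/2) * (trace (A ** C) * trace (B ** B) - trace (A ** B) * trace (B ** C))) *m
       (Const (1/2) *m (A ** A + A ** A) - (Const (1/3) * trace (A ** A)) *m mat 1)
   + (Const (1/2) * (trace (A ** A) * trace (B ** C) - trace (A ** B) * trace (A ** C))) *m
       (Const (1/2) *m (A ** B + B ** A) - (Const (1/3) * trace (A ** B)) *m mat 1)
   + (Const (1/2) * (trace (A ** B) ^ 2 - trace (A ** A) * trace (B ** B))) *m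
       (Const (1/2) *m (A ** C + C ** A) - (Const (1/3) * trace (A ** C)) *m mat 1)"
proof -
  have "Const (1/4 :: 'k) = Const (1/2) * Const (1/2)"
    by (simp add: Const_mult)
  then show ?thesis
    using msc_eq_Const_inverse[OF alternating3_trace_triple_mcomm_square[OF alternating]]
    by (simp add: vec_eq_iff msc_def algebra_simps power2_eq_square)
qed

end

theorem proposition5p7:
  fixes t1 t2 t3 :: "('k::field_char_0 pol)^3^3"
    and f11 f12 f13 f112 f113 f132 f123 :: "('k::field_char_0 pol)^3^3"
  defines "t1 \<equiv> gen_skew 1" and "t2 \<equiv> gen_skew 2" and "t3 \<equiv> gen_skew 3"
    and "f11 \<equiv> fsym 1 1" and "f12 \<equiv> fsym 1 2" and "f13 \<equiv> fsym 1 3"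
    and "f112 \<equiv> fsq 1 2" and "f113 \<equiv> fsq 1 3"
    and "f132 \<equiv> fanti 1 3 2" and "f123 \<equiv> fanti 1 2 3"
  shows
  "(trace (t1 ** t2 ** t3) *m t1 =
     Const (1/2) *m (trace (t1 ** t1) *m mcomm t2 t3 - trace (t1 ** t2) *m mcomm t1 t3
                     + trace (t1 ** t3) *m mcomm t1 t2))
  \<and> (trace (t1 ** t2 ** t3) *m mcomm t1 t2 =
     (Const (1/4) * (trace (t1 ** t3) * trace (t2 ** t2) - trace (t1 ** t2) * trace (t2 ** t3))) *m t1
   + (Const (1/4) * (trace (t1 ** t1) * trace (t2 ** t3) - trace (t1 ** t2) * trace (t1 ** t3))) *m t2
   + (Const (1/4) * (trace (t1 ** t2) ^ 2 - trace (t1 ** t1) * trace (t2 ** t2))) *m t3)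
  \<and> (trace (t1 ** t2 ** t3) *m f11 =
     (Const (1/4) * trace (t1 ** t3)) *m f112 - (Const (1/4) * trace (t1 ** t2)) *m f113
   - (Const (1/12) * trace (t1 ** t1)) *m f132 + (Const (1/12) * trace (t1 ** t1)) *m f123)
  \<and> (trace (t1 ** t2 ** t3) *m f112 =
     (Const (1/2) * (trace (t1 ** t3) * trace (t2 ** t2) - trace (t1 ** t2) * trace (t2 ** t3))) *m f11
   + (Const (1/2) * (trace (t1 ** t1) * trace (t2 ** t3) - trace (t1 ** t2) * trace (t1 ** t3))) *m f12
   + (Const (1/2) * (trace (t1 ** t2) ^ 2 - trace (t1 ** t1) * trace (t2 ** t2))) *m f13)"
proof -
  note alternating = alternating_gen_skew alternating_gen_skew alternating_gen_skew
  show ?thesis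
    unfolding assms fsym_def fsq_def fanti_def
    using alternating3_trace_triple_first_Const[OF alternating]
      alternating3_trace_triple_mcomm_Const[OF alternating]
      alternating3_trace_triple_traceless_square_Const[OF alternating]
      alternating3_trace_triple_mcomm_square_Const[OF alternating]
    by blast
qed

end
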